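(* Let $M\ge 2$ and define $$\mathcal{B}=\Big\{(n_1,\dots,n_M,P_1,\dots,P_M)\in\mathbb{R}_{>0}^{2M}\;:\;0.5>\varepsilon_1(n_1,P_1)>\varepsilon_M(n_1,\dots,n_M,P_1,\dots,P_M)>Q\big(\sqrt{2B\ln 2}/3\big)\Big\}.$$ Fix $(n_1,\dots,n_M,P_1,\dots,P_M)\in\mathbb{R}_{>0}^{2M}$. Then on any interval of values $a>0$ for which $(an_1,n_2,\dots,n_M,P_1/a,P_2,\dots,P_M)\in\mathcal{B}$, both functions $a\mapsto\varepsilon_1(an_1,P_1/a)$ and $a\mapsto\varepsilon_M(an_1,n_2,\dots,n_M,P_1/a,P_2,\dots,P_M)$ are non-increasing in $a$.
   Context: Fix $B>0$. Let $Q(x)=\frac{1}{\sqrt{2\pi}}\int_x^\infty e^{-t^2/2}\,dt$. For $m\ge 1$, blocklengths $\vec n_m=(n_1,\dots,n_m)$ with $n_i>0$ and powers $\vec P_m=(P_1,\dots,P_m)$ with $P_i\ge 0$ (not all zero), define $$\varepsilon_m(\vec n_m,\vec P_m)=Q\!\left(\frac{\sum_{i=1}^m n_i\ln(1+P_i)-B\ln 2}{\sqrt{\sum_{i=1}^m \frac{n_iP_i(P_i+2)}{(P_i+1)^2}}}\right),$$ written also as $\varepsilon_m(n_1,\dots,n_m,P_1,\dots,P_m)$. *)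

theory Defs
  imports "HOL-Analysis.Analysis"
begin

definition Qfun :: "real \<Rightarrow> real" where
  "Qfun x = integral {x..} (\<lambda>t. exp (- (t ^ 2) / 2) / sqrt (2 * pi))"

definition eps :: "real \<Rightarrow> nat \<Rightarrow> (nat \<Rightarrow> real) \<Rightarrow> (nat \<Rightarrow> real) \<Rightarrow> real" where
  "eps B m n P = Qfun (((\<Sum>i=1..m. n i * ln (1 + P i)) - B * ln 2)
                 / sqrt (\<Sum>i=1..m. n i * P i * (P i + 2) / (P i + 1) ^ 2))"

definition inB :: "real \<Rightarrow> nat \<Rightarrow> (nat \<Rightarrow> real) \<Rightarrow> (nat \<Rightarrow> real) \<Rightarrow> bool" where
  "inB B M n P \<longleftrightarrow> (\<forall>i\<in>{1..M}. n i > 0 \<and> P i > 0) \<and>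
     0.5 > eps B 1 n P \<and> eps B 1 n P > eps B M n P \<and>
     eps B M n P > Qfun (sqrt (2 * B * ln 2) / 3)"

end

theory Submission
  imports Defs "HOL-Probability.Distributions"
begin

text \<open>Write \<open>\<beta> = B ln 2\<close>, \<open>x = P\<^sub>1\<close> and let the first user have blocklength \<open>a n\<^sub>1\<close> and power
\<open>P\<^sub>1/a\<close>. Its rate term \<open>H(a) = a n\<^sub>1 ln(1 + x/a)\<close> and dispersion \<open>G(a) = n\<^sub>1 x a (x + 2a)/(x + a)\<^sup>2\<close>
both increase with \<open>a\<close>, so the argument \<open>(H + R - \<beta>)/\<surd>(G + S)\<close> of \<open>Q\<close> (with \<open>R\<close>, \<open>S\<close> the
contributions of the other users) might a priori move either way. Its derivative is nonnegative
as soon as \<open>\<beta> < H\<close> and the argument stays below \<open>\<surd>(2\<beta>)/3\<close>, thanks to the elementary inequality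
\<open>H G'\<^sup>2 \<le> 18 H'\<^sup>2 G\<close>; in the variables \<open>w = x/(x + a)\<close> and \<open>L = ln(1 + x/a)\<close> it reduces to a
polynomial inequality that follows from \<open>w + w\<^sup>2/2 \<le> L\<close>. Membership in \<open>\<B>\<close> supplies exactly
these two conditions, because \<open>Q\<close> is decreasing with \<open>Q(0) \<ge> 1/2\<close>; hence both arguments
increase along the interval and both error probabilities decrease.\<close>

lemma Qfun_eq_std_normal:
  "Qfun x = (\<integral>t. indicator {x..} t *\<^sub>R std_normal_density t \<partial>lborel)"
proof -
  have integrable: "set_integrable lborel {x..} std_normal_density"
    unfolding set_integrable_def by (intro integrable_mult_indicator) auto
  have "(\<lambda>t. exp (- (t ^ 2) / 2) / sqrt (2 * pi)) = std_normal_density"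
    by (auto simp: std_normal_density_def)
  then show ?thesis
    using set_borel_integral_eq_integral(2)[OF integrable]
    unfolding Qfun_def set_lebesgue_integral_def by simp
qed

lemma Qfun_antimono: "x \<le> y \<Longrightarrow> Qfun y \<le> Qfun x"
  unfolding Qfun_eq_std_normal
  by (intro integral_mono integrable_mult_indicator) (auto split: split_indicator)

lemma Qfun_less_imp_greater: "Qfun x < Qfun y \<Longrightarrow> y < x"
  using Qfun_antimono[of x y] by linarith

lemma Qfun_zero_ge_half: "Qfun 0 \<ge> 1/2"
proof -
  let ?g = std_normal_density
  let ?int = "\<lambda>A. \<integral>t. indicator A t *\<^sub>R ?g t \<partial>lborel"
  have integrable: "integrable lborel (\<lambda>t. indicator A t *\<^sub>R ?g t)" if "A \<in> sets borel" for A
    using that by (intro integrable_mult_indicator) auto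
  have "1 = (\<integral>t. ?g t \<partial>lborel)" by simp
  also have "\<dots> = (\<integral>t. indicator {0..} t *\<^sub>R ?g t + indicator {..<0} t *\<^sub>R ?g t \<partial>lborel)"
    by (intro Bochner_Integration.integral_cong) (auto split: split_indicator)
  also have "\<dots> = ?int {0..} + ?int {..<0}"
    by (intro Bochner_Integration.integral_add integrable) auto
  also have "?int {..<0} = ?int {0<..}"
    by (subst lborel_integral_real_affine[where c="-1" and t=0])
       (auto intro!: Bochner_Integration.integral_cong split: split_indicator
             simp: std_normal_density_def)
  also have "\<dots> \<le> ?int {0..}"
    by (intro integral_mono integrable) (auto split: split_indicator)
  finally show ?thesis unfolding Qfun_eq_std_normal by simp
qed

lemma minus_ln_one_minus_ge:
  fixes w :: real
  assumes "0 \<le> w" "w < 1"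
  shows "w + w\<^sup>2 / 2 \<le> - ln (1 - w)"
proof -
  let ?f = "\<lambda>v::real. - ln (1 - v) - v - v\<^sup>2 / 2"
  have "?f 0 \<le> ?f w"
  proof (rule DERIV_nonneg_imp_nondecreasing[OF assms(1)])
    fix v :: real
    assume "0 \<le> v" "v \<le> w"
    then have "v < 1" using assms by simp
    then have "(?f has_real_derivative (1 / (1 - v) - 1 - v)) (at v)"
      by (auto intro!: derivative_eq_intros)
    moreover have "1 + v \<le> 1 / (1 - v)"
      using \<open>v < 1\<close> by (simp add: pos_le_divide_eq algebra_simps)
    ultimately show "\<exists>y. (?f has_real_derivative y) (at v) \<and> 0 \<le> y"
      by force
  qed
  then show ?thesis by simp
qed

text \<open>The difference of the two sides, as a function of \<open>D = L - w\<close>, increases for \<open>D \<ge> w\<^sup>2/2\<close>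
  (it factors through \<open>D - w\<^sup>2/2\<close>), and at \<open>D = w\<^sup>2/2\<close> it equals \<open>w\<^sup>5 (3 + 2w - 2w\<^sup>2) \<ge> 0\<close>.\<close>

lemma log_bound_imp_poly_ineq:
  fixes w L :: real
  assumes w: "0 < w" "w < 1" and L: "w + w\<^sup>2 / 2 \<le> L"
  shows "L * w ^ 3 * (3 - 2 * w)\<^sup>2 \<le> 18 * (L - w)\<^sup>2 * (2 - w)"
proof -
  define D where "D = L - w"
  define D0 where "D0 = w\<^sup>2 / 2"
  define k where "k = (3 - 2 * w)\<^sup>2"
  have "0 \<le> D0" "D0 \<le> D" using L by (simp_all add: D_def D0_def)
  have "w ^ 3 \<le> w\<^sup>2" using w by (simp add: power3_eq_cube power2_eq_square mult_le_cancel_left1)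
  moreover have "k \<le> 9" unfolding k_def using w by (simp add: power2_eq_square algebra_simps)
  ultimately have "w ^ 3 * k \<le> w\<^sup>2 * 9" unfolding k_def using w by (intro mult_mono) auto
  also have "\<dots> = 18 * D0" by (simp add: D0_def)
  also have "\<dots> \<le> 18 * (D + D0)" using \<open>0 \<le> D0\<close> \<open>D0 \<le> D\<close> by argo
  also have "\<dots> \<le> 18 * (2 - w) * (D + D0)"
    using \<open>0 \<le> D0\<close> \<open>D0 \<le> D\<close> w by (intro mult_right_mono) auto
  finally have slope: "0 \<le> (D - D0) * (18 * (2 - w) * (D + D0) - w ^ 3 * k)"
    using \<open>D0 \<le> D\<close> by simp
  have "w\<^sup>2 \<le> 1" using w by (intro power_le_one) auto
  then have "0 \<le> w ^ 4 * (w * (3 + 2 * w - 2 * w\<^sup>2))" using w by simp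
  also have "\<dots> = 18 * (2 - w) * D0\<^sup>2 - (w + D0) * w ^ 3 * k"
    unfolding D0_def k_def
    by (simp add: power2_eq_square power3_eq_cube algebra_simps numeral_eq_Suc)
  also have "\<dots> = 18 * (2 - w) * D\<^sup>2 - (w + D) * w ^ 3 * k - (D - D0) * (18 * (2 - w) * (D + D0) - w ^ 3 * k)"
    by (simp add: power2_eq_square algebra_simps)
  finally have "0 \<le> 18 * (2 - w) * D\<^sup>2 - (w + D) * w ^ 3 * k"
    using slope by linarith
  then show ?thesis unfolding D_def k_def by (simp add: algebra_simps)
qed

lemma ln_one_plus_div_ge:
  fixes x t :: real
  assumes "0 < x" "0 < t"
  shows "x / (x + t) + (x / (x + t))\<^sup>2 / 2 \<le> ln (1 + x / t)"
proof -
  have "1 - x / (x + t) = inverse (1 + x / t)"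
    using assms by (simp add: field_simps)
  then show ?thesis
    using minus_ln_one_minus_ge[of "x / (x + t)"] assms by (simp add: ln_inverse)
qed

text \<open>With \<open>w = x/(x + t)\<close> and \<open>L = ln(1 + x/t)\<close> the four factors are \<open>n t L\<close>, \<open>n w\<^sup>2 (3 - 2w)\<close>,
  \<open>n (L - w)\<close> and \<open>n t w (2 - w)\<close>, so this is \<open>log_bound_imp_poly_ineq\<close> multiplied by \<open>n\<^sup>3 t w\<close>.\<close>

lemma scaled_rate_dispersion_ineq:
  fixes n x t :: real
  assumes n: "0 < n" and x: "0 < x" and t: "0 < t"
  shows "t * n * ln (1 + x / t) * (n * x\<^sup>2 * (x + 3 * t) / (x + t) ^ 3)\<^sup>2
    \<le> 18 * (n * (ln (1 + x / t) - x / (t + x)))\<^sup>2 * (n * x * t * (x + 2 * t) / (x + t)\<^sup>2)"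
proof -
  define w where "w = x / (x + t)"
  define L where "L = ln (1 + x / t)"
  have w: "0 < w" "w < 1" using x t by (auto simp: w_def)
  have "w + w\<^sup>2 / 2 \<le> L"
    unfolding w_def L_def using ln_one_plus_div_ge[OF x t] .
  then have poly: "L * w ^ 3 * (3 - 2 * w)\<^sup>2 \<le> 18 * (L - w)\<^sup>2 * (2 - w)"
    using log_bound_imp_poly_ineq w by blast
  have "t * n * ln (1 + x / t) * (n * x\<^sup>2 * (x + 3 * t) / (x + t) ^ 3)\<^sup>2
      = (n ^ 3 * t * w) * (L * w ^ 3 * (3 - 2 * w)\<^sup>2)"
    using x t unfolding w_def L_def
    by (simp add: field_simps power2_eq_square power3_eq_cube)
  also have "\<dots> \<le> (n ^ 3 * t * w) * (18 * (L - w)\<^sup>2 * (2 - w))"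
    using poly n t w by (intro mult_left_mono) auto
  also have "\<dots> = 18 * (n * (ln (1 + x / t) - x / (t + x)))\<^sup>2 * (n * x * t * (x + 2 * t) / (x + t)\<^sup>2)"
    using x t unfolding w_def L_def
    by (simp add: field_simps power2_eq_square power3_eq_cube)
  finally show ?thesis .
qed

lemma has_real_derivative_scaled_rate:
  fixes n x t :: real
  assumes "0 < x" "0 < t"
  shows "((\<lambda>t. t * n * ln (1 + x / t)) has_real_derivative n * (ln (1 + x / t) - x / (t + x))) (at t)"
proof -
  have "((\<lambda>t. t * n * ln (1 + x / t)) has_real_derivative
      n * ln (1 + x / t) + t * n * (- (x / t\<^sup>2) / (1 + x / t))) (at t)"
    using assms by (auto intro!: derivative_eq_intros simp: add_pos_pos power2_eq_square ac_simps)
  moreover have "t * n * (- (x / t\<^sup>2) / (1 + x / t)) = - n * (x / (t + x))"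
  proof -
    have "1 + x / t = (t + x) / t" using assms by (simp add: field_simps)
    then show ?thesis using assms by (simp add: power2_eq_square)
  qed
  ultimately show ?thesis by (simp add: right_diff_distrib)
qed

lemma has_real_derivative_scaled_dispersion:
  fixes n x t :: real
  assumes "0 < x" "0 < t"
  shows "((\<lambda>t. n * x * t * (x + 2 * t) / (x + t)\<^sup>2) has_real_derivative
    n * x\<^sup>2 * (x + 3 * t) / (x + t) ^ 3) (at t)"
proof -
  have "((\<lambda>t. n * x * t * (x + 2 * t) / (x + t)\<^sup>2) has_real_derivative
     ((n * x * 1 * (x + 2 * t) + n * x * t * 2) * (x + t)\<^sup>2 - n * x * t * (x + 2 * t) * (2 * (x + t)))
       / ((x + t)\<^sup>2 * (x + t)\<^sup>2)) (at t)"
    using assms by (auto intro!: derivative_eq_intros simp: power2_eq_square)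
  moreover have "((n * x * 1 * (x + 2 * t) + n * x * t * 2) * (x + t)\<^sup>2 - n * x * t * (x + 2 * t) * (2 * (x + t)))
       / ((x + t)\<^sup>2 * (x + t)\<^sup>2) = n * x\<^sup>2 * (x + 3 * t) / (x + t) ^ 3"
  proof -
    have "(n * x * 1 * (x + 2 * t) + n * x * t * 2) * (x + t)\<^sup>2 - n * x * t * (x + 2 * t) * (2 * (x + t))
        = (n * x\<^sup>2 * (x + 3 * t)) * (x + t)"
      by (simp add: power2_eq_square algebra_simps)
    moreover have "(x + t)\<^sup>2 * (x + t)\<^sup>2 = (x + t) ^ 3 * (x + t)"
      by (simp add: power2_eq_square power3_eq_cube)
    ultimately show ?thesis using assms by simp
  qed
  ultimately show ?thesis by simp
qed

text \<open>The conclusion is the numerator of the quotient-rule derivative of \<open>N/\<surd>V\<close>.\<close>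

lemma sqrt_quotient_derivative_nonneg:
  fixes c G N N' V V' :: real
  assumes G: "0 \<le> G" "G \<le> V" and V: "0 < V" and N': "0 \<le> N'" and V': "0 \<le> V'"
    and N: "N \<le> c * sqrt V" and ineq: "(c * V')\<^sup>2 \<le> 4 * N'\<^sup>2 * G"
  shows "0 \<le> N' * sqrt V - N * V' / (2 * sqrt V)"
proof -
  have "(c * V')\<^sup>2 \<le> (2 * N' * sqrt G)\<^sup>2"
    using ineq G by (simp add: power_mult_distrib real_sqrt_pow2)
  moreover have "0 \<le> 2 * N' * sqrt G" using N' G by simp
  ultimately have "c * V' \<le> 2 * N' * sqrt G" by (rule power2_le_imp_le)
  also have "\<dots> \<le> 2 * N' * sqrt V"
    using N' G by (simp add: mult_left_mono)
  finally have cV': "c * V' / 2 \<le> N' * sqrt V" by simp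
  have "N * V' / (2 * sqrt V) \<le> c * sqrt V * V' / (2 * sqrt V)"
    using N V V' by (intro divide_right_mono mult_right_mono) auto
  also have "\<dots> = c * V' / 2"
    using V by (simp add: field_simps)
  finally show ?thesis using cV' by linarith
qed

text \<open>The argument of \<open>Q\<close> when the first user has blocklength \<open>t n\<close> and power \<open>x/t\<close>; \<open>R\<close> and
  \<open>S\<close> are the other users' contributions to the rate and dispersion sums, and \<open>\<beta> = B ln 2\<close>.\<close>

definition scaled_arg :: "real \<Rightarrow> real \<Rightarrow> real \<Rightarrow> real \<Rightarrow> real \<Rightarrow> real \<Rightarrow> real" where
  "scaled_arg n x \<beta> R S t =
     (t * n * ln (1 + x / t) + R - \<beta>) / sqrt (n * x * t * (x + 2 * t) / (x + t)\<^sup>2 + S)"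

lemma scaled_arg_mono_on:
  fixes n x \<beta> R S :: real and I :: "real set"
  assumes n: "0 < n" and x: "0 < x" and \<beta>: "0 \<le> \<beta>" and S: "0 \<le> S"
    and I: "is_interval I" "I \<subseteq> {0<..}"
    and rate: "\<And>t. t \<in> I \<Longrightarrow> \<beta> < t * n * ln (1 + x / t)"
    and small: "\<And>t. t \<in> I \<Longrightarrow> scaled_arg n x \<beta> R S t < sqrt (2 * \<beta>) / 3"
  shows "mono_on I (scaled_arg n x \<beta> R S)"
proof (rule mono_onI)
  fix a b assume ab: "a \<in> I" "b \<in> I" "a \<le> b"
  show "scaled_arg n x \<beta> R S a \<le> scaled_arg n x \<beta> R S b"
  proof (rule DERIV_nonneg_imp_nondecreasing[OF \<open>a \<le> b\<close>])
    fix t assume "a \<le> t" "t \<le> b"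
    then have "t \<in> I" using I(1) ab unfolding is_interval_1 by blast
    then have t: "0 < t" using I(2) by auto
    define H where "H = t * n * ln (1 + x / t)"
    define G where "G = n * x * t * (x + 2 * t) / (x + t)\<^sup>2"
    define H' where "H' = n * (ln (1 + x / t) - x / (t + x))"
    define G' where "G' = n * x\<^sup>2 * (x + 3 * t) / (x + t) ^ 3"
    define c where "c = sqrt (2 * \<beta>) / 3"
    have G: "0 < G" unfolding G_def using n x t by simp
    have G': "0 \<le> G'" unfolding G'_def using n x t by simp
    have "0 \<le> (x / (x + t))\<^sup>2 / 2" by simp
    then have "x / (x + t) \<le> ln (1 + x / t)" using ln_one_plus_div_ge[OF x t] by linarith
    then have H': "0 \<le> H'" unfolding H'_def using n by (simp add: add.commute)
    have "(c * G')\<^sup>2 = 2 * \<beta> / 9 * G'\<^sup>2"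
      using \<beta> by (simp add: c_def power_mult_distrib power_divide)
    also have "\<dots> \<le> 2 * H / 9 * G'\<^sup>2"
      using rate[OF \<open>t \<in> I\<close>] by (intro mult_right_mono) (auto simp: H_def)
    also have "\<dots> \<le> 4 * H'\<^sup>2 * G"
      using scaled_rate_dispersion_ineq[OF n x t] by (simp add: H_def H'_def G_def G'_def)
    finally have ineq: "(c * G')\<^sup>2 \<le> 4 * H'\<^sup>2 * G" .
    have "(H + R - \<beta>) / sqrt (G + S) < c"
      using small[OF \<open>t \<in> I\<close>] by (simp add: scaled_arg_def H_def G_def c_def)
    then have "H + R - \<beta> \<le> c * sqrt (G + S)"
      using G S by (simp add: pos_divide_less_eq)
    with G S H' G' ineq
    have "0 \<le> H' * sqrt (G + S) - (H + R - \<beta>) * G' / (2 * sqrt (G + S))"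
      by (intro sqrt_quotient_derivative_nonneg[of G "G + S" H' G' "H + R - \<beta>" c]) auto
    moreover have "(scaled_arg n x \<beta> R S has_real_derivative
        (H' * sqrt (G + S) - (H + R - \<beta>) * (inverse (sqrt (G + S)) / 2 * G'))
          / (sqrt (G + S) * sqrt (G + S))) (at t)"
    proof -
      have N: "((\<lambda>t. t * n * ln (1 + x / t) + R - \<beta>) has_real_derivative H') (at t)"
        using DERIV_diff[OF DERIV_add[OF has_real_derivative_scaled_rate[OF x t] DERIV_const] DERIV_const]
        by (simp add: H'_def)
      have "((\<lambda>t. n * x * t * (x + 2 * t) / (x + t)\<^sup>2 + S) has_real_derivative G') (at t)"
        using DERIV_add[OF has_real_derivative_scaled_dispersion[OF x t] DERIV_const]
        by (simp add: G'_def)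
      from DERIV_chain2[OF DERIV_real_sqrt this]
      have "((\<lambda>t. sqrt (n * x * t * (x + 2 * t) / (x + t)\<^sup>2 + S)) has_real_derivative
          inverse (sqrt (G + S)) / 2 * G') (at t)"
        using G S by (simp add: G_def)
      from DERIV_divide[OF N this] show ?thesis
        using G S by (simp add: scaled_arg_def[abs_def] H_def G_def)
    qed
    ultimately show "\<exists>y. (scaled_arg n x \<beta> R S has_real_derivative y) (at t) \<and> 0 \<le> y"
      by (force simp: field_simps)
  qed
qed


definition eps_arg :: "real \<Rightarrow> nat \<Rightarrow> (nat \<Rightarrow> real) \<Rightarrow> (nat \<Rightarrow> real) \<Rightarrow> real" where
  "eps_arg B m n P = ((\<Sum>i=1..m. n i * ln (1 + P i)) - B * ln 2)
     / sqrt (\<Sum>i=1..m. n i * P i * (P i + 2) / (P i + 1)\<^sup>2)"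

lemma eps_eq_Qfun_eps_arg: "eps B m n P = Qfun (eps_arg B m n P)"
  by (simp add: eps_def eps_arg_def)

lemma inB_imp_eps_arg_bounds:
  assumes "inB B M n P"
  shows "0 < eps_arg B 1 n P" "eps_arg B 1 n P < eps_arg B M n P"
    "eps_arg B M n P < sqrt (2 * B * ln 2) / 3"
proof -
  have "Qfun (eps_arg B 1 n P) < Qfun 0" "Qfun (eps_arg B M n P) < Qfun (eps_arg B 1 n P)"
    "Qfun (sqrt (2 * B * ln 2) / 3) < Qfun (eps_arg B M n P)"
    using assms Qfun_zero_ge_half unfolding inB_def eps_eq_Qfun_eps_arg by auto
  then show "0 < eps_arg B 1 n P" "eps_arg B 1 n P < eps_arg B M n P"
    "eps_arg B M n P < sqrt (2 * B * ln 2) / 3"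
    by (blast dest: Qfun_less_imp_greater)+
qed

lemma eps_arg_scale_first_user:
  fixes B t :: real and m :: nat and n P :: "nat \<Rightarrow> real"
  assumes m: "1 \<le> m" and t: "0 < t" and P: "0 < P 1"
  shows "eps_arg B m (n(1 := t * n 1)) (P(1 := P 1 / t)) =
    scaled_arg (n 1) (P 1) (B * ln 2) (\<Sum>i=2..m. n i * ln (1 + P i))
      (\<Sum>i=2..m. n i * P i * (P i + 2) / (P i + 1)\<^sup>2) t"
proof -
  have "t * n 1 * (P 1 / t) * (P 1 / t + 2) / (P 1 / t + 1)\<^sup>2
      = n 1 * P 1 * t * (P 1 + 2 * t) / (P 1 + t)\<^sup>2"
  proof -
    have "P 1 / t + 2 = (P 1 + 2 * t) / t" "P 1 / t + 1 = (P 1 + t) / t"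
      using t by (simp_all add: field_simps)
    moreover have "P 1 + t \<noteq> 0" using t P by simp
    ultimately show ?thesis
      using t by (simp add: power_divide field_simps) (simp add: power2_eq_square algebra_simps)
  qed
  then show ?thesis
    using m unfolding eps_arg_def scaled_arg_def
    by (simp add: sum.atLeast_Suc_atMost numeral_2_eq_2 add.commute add.left_commute)
qed

lemma scaled_arg_pos_imp_rate_gt:
  fixes n x \<beta> t :: real
  assumes "0 < n" "0 < x" "0 < t" and "0 < scaled_arg n x \<beta> 0 0 t"
  shows "\<beta> < t * n * ln (1 + x / t)"
proof -
  have "0 < sqrt (n * x * t * (x + 2 * t) / (x + t)\<^sup>2)" using assms by simp
  with assms(4) show ?thesis
    unfolding scaled_arg_def by (metis add_0_right diff_gt_0_iff_gt zero_less_divide_iff not_less_iff_gr_or_eq)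
qed

theorem lemma3:
  fixes B :: real and M :: nat and n P :: "nat \<Rightarrow> real" and I :: "real set"
  assumes "B > 0" and "M \<ge> 2"
    and "\<forall>i\<in>{1..M}. n i > 0 \<and> P i > 0"
    and "is_interval I" and "I \<subseteq> {0<..}"
    and "\<forall>a\<in>I. inB B M (n(1 := a * n 1)) (P(1 := P 1 / a))"
  shows "(\<forall>a\<in>I. \<forall>b\<in>I. a \<le> b \<longrightarrow>
           eps B 1 (n(1 := b * n 1)) (P(1 := P 1 / b)) \<le> eps B 1 (n(1 := a * n 1)) (P(1 := P 1 / a))) \<and>
         (\<forall>a\<in>I. \<forall>b\<in>I. a \<le> b \<longrightarrow>
           eps B M (n(1 := b * n 1)) (P(1 := P 1 / b)) \<le> eps B M (n(1 := a * n 1)) (P(1 := P 1 / a)))"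
proof -
  note pos = assms(3) and I = assms(4,5)
  have n: "0 < n 1" and x: "0 < P 1" and M: "1 \<le> M" using pos assms(2) by auto
  define \<beta> where "\<beta> = B * ln 2"
  define R where "R m = (\<Sum>i=2..m. n i * ln (1 + P i))" for m
  define S where "S m = (\<Sum>i=2..m. n i * P i * (P i + 2) / (P i + 1)\<^sup>2)" for m
  let ?arg = "\<lambda>m. scaled_arg (n 1) (P 1) \<beta> (R m) (S m)"
  have arg: "eps_arg B m (n(1 := t * n 1)) (P(1 := P 1 / t)) = ?arg m t" if "1 \<le> m" "t \<in> I" for m t
    using eps_arg_scale_first_user[of m t P B n] that I x by (auto simp: \<beta>_def R_def S_def)
  have bounds: "0 < ?arg 1 t" "?arg 1 t < ?arg M t" "?arg M t < sqrt (2 * \<beta>) / 3" if "t \<in> I" for t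
    using inB_imp_eps_arg_bounds[OF assms(6)[rule_format, OF that]] arg[OF _ that] M
    by (simp_all add: \<beta>_def mult.assoc)
  have mono: "mono_on I (?arg m)" if "m \<in> {1, M}" for m
  proof (rule scaled_arg_mono_on[OF n x _ _ I])
    show "0 \<le> \<beta>" using assms(1) by (simp add: \<beta>_def)
    show "0 \<le> S m"
      unfolding S_def using that pos by (intro sum_nonneg) (simp add: less_imp_le)
    show "\<beta> < t * n 1 * ln (1 + P 1 / t)" "?arg m t < sqrt (2 * \<beta>) / 3" if "t \<in> I" for t
      using bounds[OF that] \<open>m \<in> {1, M}\<close> I that n x scaled_arg_pos_imp_rate_gt[of "n 1" "P 1" t \<beta>]
      by (auto simp: R_def S_def)
  qed
  show ?thesis
  proof (intro conjI ballI impI)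
    fix a b assume ab: "a \<in> I" "b \<in> I" "a \<le> b"
    have "?arg m a \<le> ?arg m b" if "m \<in> {1, M}" for m
      using mono_onD[OF mono[OF that] ab] .
    then show "eps B 1 (n(1 := b * n 1)) (P(1 := P 1 / b)) \<le> eps B 1 (n(1 := a * n 1)) (P(1 := P 1 / a))"
      and "eps B M (n(1 := b * n 1)) (P(1 := P 1 / b)) \<le> eps B M (n(1 := a * n 1)) (P(1 := P 1 / a))"
      unfolding eps_eq_Qfun_eps_arg arg[OF order_refl ab(1)] arg[OF order_refl ab(2)]
        arg[OF M ab(1)] arg[OF M ab(2)]
      by (simp_all add: Qfun_antimono)
  qed
qed

end
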